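(* Suppose there is a constant $a>0$ such that $\mathbb P(\|\hat F^{(i)}_t-F^{(i)}\|\ge x)\le2\exp(-atx^2)$ for all $i\in\mathbb K$, $x>0$, $t\ge1$. Then for every admissible policy $\pi$, every $T\ge1$ and every $x\ge0$, $$\mathbb P\bigl(\|\hat F^\pi_T-\tilde F^\pi_T\|>x\bigr)\le2KT\exp\Bigl(-a\frac{Tx^2}{K^2}\Bigr).$$
   Context: Bandit setting: $K\ge1$, $\mathbb K=\{1,\dots,K\}$; arm $i$ produces i.i.d. rewards $X^{(i)}_1,X^{(i)}_2,\dots$ with distribution function $F^{(i)}$, all rewards mutually independent. An admissible policy $\pi=(\pi_1,\pi_2,\dots)$ chooses $\pi_t\in\mathbb K$ as a measurable function of an independent randomization variable and of past actions/rewards; $\tau_i(t)=\sum_{s\le t}\mathbf 1\{\pi_s=i\}$, the reward at time $t$ is $X^\pi_t=X^{(i)}_{\tau_i(t)}$ on $\{\pi_t=i\}$. $\hat F^\pi_T(y)=\frac1T\sum_{t\le T}\mathbf 1\{X^\pi_t\le y\}$, $\hat F^{(i)}_t(y)=\frac1t\sum_{s\le t}\mathbf 1\{X^{(i)}_s\le y\}$, and $\tilde F^\pi_T=\frac1T\sum_{i=1}^K\tau_i(T)F^{(i)}$. $\|\cdot\|$ is a norm on a vector space of bounded functions $\mathbb R\to\mathbb R$ containing all these functions. *)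

theory Defs
  imports "HOL-Probability.Probability"
begin

definition fun_norm_on :: "(real \<Rightarrow> real) set \<Rightarrow> ((real \<Rightarrow> real) \<Rightarrow> real) \<Rightarrow> bool" where
  "fun_norm_on V N \<longleftrightarrow>
     (\<lambda>_. 0) \<in> V \<and> (\<forall>f\<in>V. \<forall>g\<in>V. (\<lambda>y. f y + g y) \<in> V) \<and>
     (\<forall>c. \<forall>f\<in>V. (\<lambda>y. c * f y) \<in> V) \<and>
     (\<forall>f\<in>V. \<exists>B. \<forall>y. \<bar>f y\<bar> \<le> B) \<and>
     (\<forall>f\<in>V. N f \<ge> 0) \<and> (\<forall>f\<in>V. N f = 0 \<longleftrightarrow> f = (\<lambda>_. 0)) \<and>
     (\<forall>c. \<forall>f\<in>V. N (\<lambda>y. c * f y) = \<bar>c\<bar> * N f) \<and>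
     (\<forall>f\<in>V. \<forall>g\<in>V. N (\<lambda>y. f y + g y) \<le> N f + N g)"

text \<open>A policy rule: pol t u as xs is the arm chosen at time t given the randomization value u,
  the past actions as s and past rewards xs s (s = 1 .. t-1).\<close>
definition admissible_policy ::
  "nat \<Rightarrow> 'u measure \<Rightarrow> (nat \<Rightarrow> 'u \<Rightarrow> (nat \<Rightarrow> nat) \<Rightarrow> (nat \<Rightarrow> real) \<Rightarrow> nat) \<Rightarrow> bool" where
  "admissible_policy K Mu pol \<longleftrightarrow>
     (\<forall>t\<ge>1. \<forall>u as xs. pol t u as xs \<in> {1..K}) \<and>
     (\<forall>t\<ge>1. (\<lambda>(u, as, xs). pol t u as xs) \<in>
        measurable (Mu \<Otimes>\<^sub>M (PiM {1..<t} (\<lambda>_. count_space UNIV) \<Otimes>\<^sub>M PiM {1..<t} (\<lambda>_. borel)))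
                   (count_space UNIV))"

text \<open>History (actions, rewards) up to time t of policy pol, arm rewards X i s (s >= 1),
  randomization U.  At time t the arm i chosen yields its tau_i(t)-th reward.\<close>
primrec pol_hist ::
  "(nat \<Rightarrow> 'u \<Rightarrow> (nat \<Rightarrow> nat) \<Rightarrow> (nat \<Rightarrow> real) \<Rightarrow> nat) \<Rightarrow> (nat \<Rightarrow> nat \<Rightarrow> 'a \<Rightarrow> real) \<Rightarrow> ('a \<Rightarrow> 'u)
    \<Rightarrow> nat \<Rightarrow> 'a \<Rightarrow> (nat \<Rightarrow> nat) \<times> (nat \<Rightarrow> real)" where
  "pol_hist pol X U 0 \<omega> = ((\<lambda>_. 0), (\<lambda>_. 0))"
| "pol_hist pol X U (Suc t) \<omega> =
     (let as = fst (pol_hist pol X U t \<omega>); xs = snd (pol_hist pol X U t \<omega>);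
          i = pol (Suc t) (U \<omega>) (restrict as {1..<Suc t}) (restrict xs {1..<Suc t});
          n = card {s \<in> {1..t}. as s = i} + 1
      in (as(Suc t := i), xs(Suc t := X i n \<omega>)))"

definition pol_action where "pol_action pol X U t \<omega> = fst (pol_hist pol X U t \<omega>) t"
definition pol_reward where "pol_reward pol X U t \<omega> = snd (pol_hist pol X U t \<omega>) t"

definition pol_count where
  "pol_count pol X U i t \<omega> = card {s \<in> {1..t}. pol_action pol X U s \<omega> = i}"

definition emp_cdf :: "(nat \<Rightarrow> nat \<Rightarrow> 'a \<Rightarrow> real) \<Rightarrow> nat \<Rightarrow> nat \<Rightarrow> 'a \<Rightarrow> real \<Rightarrow> real" where
  "emp_cdf X i t \<omega> y = (1 / real t) * (\<Sum>s = 1..t. if X i s \<omega> \<le> y then 1 else 0)"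

definition pol_emp_cdf where
  "pol_emp_cdf pol X U T \<omega> y = (1 / real T) * (\<Sum>t = 1..T. if pol_reward pol X U t \<omega> \<le> y then 1 else 0)"

definition pol_mix_cdf where
  "pol_mix_cdf K F pol X U T \<omega> y = (1 / real T) * (\<Sum>i = 1..K. real (pol_count pol X U i T \<omega>) * F i y)"

end

theory Submission
  imports Defs
begin

text \<open>Grouping the rewards collected up to time \<open>T\<close> by arm writes the deviation
  \<open>pol_emp_cdf - pol_mix_cdf\<close> as \<open>\<Sum>\<^sub>i (\<tau>\<^sub>i/T) (emp_cdf X i \<tau>\<^sub>i - F i)\<close>, where
  \<open>\<tau>\<^sub>i\<close> is the number of pulls of arm \<open>i\<close> up to time \<open>T\<close>. If its norm exceeds \<open>x\<close>,
  the triangle inequality yields an arm \<open>i\<close> with \<open>\<tau>\<^sub>i/T \<cdot> \<parallel>emp_cdf X i \<tau>\<^sub>i - F i\<parallel> > x/K\<close>.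
  Since \<open>\<tau>\<^sub>i\<close> is random and chosen by the policy, we take a union bound over all arms \<open>i\<close>
  and all possible values \<open>t \<in> {1..T}\<close> of \<open>\<tau>\<^sub>i\<close>; this needs no independence between
  policy and rewards. Each of these \<open>KT\<close> events has probability at most
  \<open>2 exp(-a t (Tx/(Kt))\<^sup>2) \<le> 2 exp(-a T x\<^sup>2/K\<^sup>2)\<close>, because \<open>t \<le> T\<close>.\<close>

lemma pol_hist_fst_eq_pol_action:
  "s \<le> t \<Longrightarrow> fst (pol_hist pol X U t \<omega>) s = pol_action pol X U s \<omega>"
proof (induction t)
  case 0
  then show ?case by (simp add: pol_action_def)
next
  case (Suc t)
  then show ?case
    by (cases "s = Suc t") (simp_all add: pol_action_def Let_def)
qed

lemma pol_action_mem_arms: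
  assumes "admissible_policy K Mu pol" and "t \<ge> 1"
  shows "pol_action pol X U t \<omega> \<in> {1..K}"
proof -
  obtain t' where "t = Suc t'" using \<open>t \<ge> 1\<close> by (cases t) auto
  then show ?thesis
    using assms(1) by (simp add: pol_action_def Let_def admissible_policy_def)
qed

lemma pol_reward_eq:
  assumes "t \<ge> 1"
  shows "pol_reward pol X U t \<omega> =
    X (pol_action pol X U t \<omega>)
      (card {s \<in> {1..t}. pol_action pol X U s \<omega> = pol_action pol X U t \<omega>}) \<omega>"
proof -
  obtain t' where t: "t = Suc t'" using assms by (cases t) auto
  define i where "i = pol_action pol X U t \<omega>"
  have "{s \<in> {1..t'}. fst (pol_hist pol X U t' \<omega>) s = i} = {s \<in> {1..t'}. pol_action pol X U s \<omega> = i}"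
    by (auto simp: pol_hist_fst_eq_pol_action)
  moreover have "{s \<in> {1..t}. pol_action pol X U s \<omega> = i} =
      insert t {s \<in> {1..t'}. pol_action pol X U s \<omega> = i}"
    using t i_def by auto
  ultimately show ?thesis
    by (simp add: t pol_reward_def pol_action_def i_def Let_def)
qed

lemma pol_count_le: "pol_count pol X U i T \<omega> \<le> T"
  unfolding pol_count_def by (rule order_trans[OF card_mono[of "{1..T}"]]) auto

text \<open>The \<open>t\<close>-th label \<open>A t\<close> is its own \<open>k\<close>-th occurrence for
  \<open>k = card {s \<le> t. A s = A t}\<close>, so summing over times equals summing, label by label,
  over occurrence numbers.\<close>
lemma sum_regroup_by_occurrence:
  fixes g :: "'a \<Rightarrow> nat \<Rightarrow> 'b::comm_monoid_add" and A :: "nat \<Rightarrow> 'a"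
  assumes "finite I" and "\<And>t. 1 \<le> t \<Longrightarrow> t \<le> T \<Longrightarrow> A t \<in> I"
  shows "(\<Sum>t = 1..T. g (A t) (card {s \<in> {1..t}. A s = A t})) =
         (\<Sum>i\<in>I. \<Sum>k = 1..card {s \<in> {1..T}. A s = i}. g i k)"
  using assms(2)
proof (induction T)
  case 0
  then show ?case by simp
next
  case (Suc T)
  define c where "c i = card {s \<in> {1..T}. A s = i}" for i
  have A_new: "A (Suc T) \<in> I" using Suc.prems by simp
  have c_Suc: "card {s \<in> {1..Suc T}. A s = i} = c i + (if A (Suc T) = i then 1 else 0)" for i
  proof -
    have "{s \<in> {1..Suc T}. A s = i} =
        (if A (Suc T) = i then insert (Suc T) {s \<in> {1..T}. A s = i} else {s \<in> {1..T}. A s = i})"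
      by (auto simp: le_Suc_eq)
    then show ?thesis by (simp add: c_def)
  qed
  have "(\<Sum>i\<in>I. \<Sum>k = 1..card {s \<in> {1..Suc T}. A s = i}. g i k) =
        (\<Sum>i\<in>I. (\<Sum>k = 1..c i. g i k) + (if A (Suc T) = i then g i (c i + 1) else 0))"
  proof (rule sum.cong[OF refl])
    fix i
    show "(\<Sum>k = 1..card {s \<in> {1..Suc T}. A s = i}. g i k) =
        (\<Sum>k = 1..c i. g i k) + (if A (Suc T) = i then g i (c i + 1) else 0)"
      by (simp only: c_Suc) (simp add: sum.cl_ivl_Suc)
  qed
  also have "\<dots> = (\<Sum>i\<in>I. \<Sum>k = 1..c i. g i k) + g (A (Suc T)) (c (A (Suc T)) + 1)"
    using assms(1) A_new by (simp add: sum.distrib)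
  finally show ?case
    using Suc c_Suc[of "A (Suc T)"] by (simp add: c_def)
qed

lemma emp_cdf_0: "emp_cdf X i 0 \<omega> = (\<lambda>_. 0)"
  by (simp add: emp_cdf_def fun_eq_iff)

lemma real_mult_emp_cdf:
  "real t * emp_cdf X i t \<omega> y = (\<Sum>s = 1..t. if X i s \<omega> \<le> y then 1 else 0)"
  by (cases "t = 0") (simp_all add: emp_cdf_def)

lemma pol_emp_cdf_minus_pol_mix_cdf:
  assumes "admissible_policy K Mu pol"
  shows "pol_emp_cdf pol X U T \<omega> y - pol_mix_cdf K F pol X U T \<omega> y =
    (\<Sum>i = 1..K. real (pol_count pol X U i T \<omega>) / real T *
        (emp_cdf X i (pol_count pol X U i T \<omega>) \<omega> y - F i y))"
proof -
  let ?A = "\<lambda>t. pol_action pol X U t \<omega>"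
  let ?\<tau> = "\<lambda>i. pol_count pol X U i T \<omega>"
  define g where "g i s = (if X i s \<omega> \<le> y then 1 else 0 :: real)" for i s
  have "(\<Sum>t = 1..T. if pol_reward pol X U t \<omega> \<le> y then 1 else 0 :: real) =
        (\<Sum>t = 1..T. g (?A t) (card {s \<in> {1..t}. ?A s = ?A t}))"
    by (intro sum.cong) (simp_all add: pol_reward_eq g_def)
  also have "\<dots> = (\<Sum>i = 1..K. \<Sum>s = 1..?\<tau> i. g i s)"
    unfolding pol_count_def
    by (rule sum_regroup_by_occurrence) (simp_all add: pol_action_mem_arms[OF assms, simplified])
  also have "\<dots> = (\<Sum>i = 1..K. real (?\<tau> i) * emp_cdf X i (?\<tau> i) \<omega> y)"
    by (simp add: real_mult_emp_cdf g_def)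
  finally show ?thesis
    by (simp add: pol_emp_cdf_def pol_mix_cdf_def sum_distrib_left sum_subtractf[symmetric]
        right_diff_distrib)
qed

lemma
  assumes "fun_norm_on V N"
  shows fun_norm_on_zero_mem: "(\<lambda>_. 0) \<in> V"
    and fun_norm_on_zero: "N (\<lambda>_. 0) = 0"
    and fun_norm_on_add_mem: "f \<in> V \<Longrightarrow> g \<in> V \<Longrightarrow> (\<lambda>y. f y + g y) \<in> V"
    and fun_norm_on_scale_mem: "f \<in> V \<Longrightarrow> (\<lambda>y. c * f y) \<in> V"
    and fun_norm_on_scale: "f \<in> V \<Longrightarrow> N (\<lambda>y. c * f y) = \<bar>c\<bar> * N f"
    and fun_norm_on_triangle: "f \<in> V \<Longrightarrow> g \<in> V \<Longrightarrow> N (\<lambda>y. f y + g y) \<le> N f + N g"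
  using assms unfolding fun_norm_on_def by blast+

lemma fun_norm_on_diff_mem:
  assumes "fun_norm_on V N" "f \<in> V" "g \<in> V"
  shows "(\<lambda>y. f y - g y) \<in> V"
  using fun_norm_on_add_mem[OF assms(1,2) fun_norm_on_scale_mem[OF assms(1,3), of "-1"]]
  by simp

lemma fun_norm_on_sum_mem:
  assumes "fun_norm_on V N" "finite I" "\<And>i. i \<in> I \<Longrightarrow> f i \<in> V"
  shows "(\<lambda>y. \<Sum>i\<in>I. f i y) \<in> V"
  using assms(2,3)
proof (induction I rule: finite_induct)
  case empty
  then show ?case using fun_norm_on_zero_mem[OF assms(1)] by simp
next
  case (insert j I)
  then show ?case using fun_norm_on_add_mem[OF assms(1)] by simp
qed

lemma fun_norm_on_sum_le:
  assumes "fun_norm_on V N" "finite I" "\<And>i. i \<in> I \<Longrightarrow> f i \<in> V"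
  shows "N (\<lambda>y. \<Sum>i\<in>I. f i y) \<le> (\<Sum>i\<in>I. N (f i))"
  using assms(2,3)
proof (induction I rule: finite_induct)
  case empty
  then show ?case using fun_norm_on_zero[OF assms(1)] by simp
next
  case (insert j I)
  have "N (\<lambda>y. f j y + (\<Sum>i\<in>I. f i y)) \<le> N (f j) + N (\<lambda>y. \<Sum>i\<in>I. f i y)"
    using fun_norm_on_triangle[OF assms(1)] fun_norm_on_sum_mem[OF assms(1) insert.hyps(1)]
      insert.prems
    by simp
  with insert show ?case by simp
qed

lemma sum_gt_imp_summand_gt_average:
  fixes f :: "'a \<Rightarrow> real"
  assumes "finite A" "A \<noteq> {}" "x < sum f A"
  obtains i where "i \<in> A" "x / real (card A) < f i"
proof (rule ccontr)
  assume "\<not> thesis"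
  then have "sum f A \<le> real (card A) * (x / real (card A))"
    using that by (intro sum_bounded_above) force
  also have "\<dots> = x" using assms(1,2) by simp
  finally show False using assms(3) by simp
qed

lemma fun_norm_on_weighted_sum_gt:
  assumes norm: "fun_norm_on V N" and "finite I" "I \<noteq> {}"
    and "\<And>i. i \<in> I \<Longrightarrow> f i \<in> V" "\<And>i. i \<in> I \<Longrightarrow> c i \<ge> 0"
    and "x < N (\<lambda>y. \<Sum>i\<in>I. c i * f i y)"
  obtains i where "i \<in> I" "x / real (card I) < c i * N (f i)"
proof -
  have scaled: "(\<lambda>y. c i * f i y) \<in> V" "N (\<lambda>y. c i * f i y) = c i * N (f i)" if "i \<in> I" for i
    using fun_norm_on_scale_mem[OF norm] fun_norm_on_scale[OF norm] assms(4,5)[OF that] by simp_all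
  have "x < (\<Sum>i\<in>I. N (\<lambda>y. c i * f i y))"
    using assms(6) fun_norm_on_sum_le[OF norm \<open>finite I\<close>, of "\<lambda>i y. c i * f i y"] scaled(1)
    by simp
  also have "\<dots> = (\<Sum>i\<in>I. c i * N (f i))"
    using scaled(2) by simp
  finally show ?thesis
    using that sum_gt_imp_summand_gt_average[OF \<open>finite I\<close> \<open>I \<noteq> {}\<close>] by blast
qed

lemma pol_deviation_gt_imp_arm_deviation_ge:
  assumes norm: "fun_norm_on V N" and adm: "admissible_policy K Mu pol" and "K \<ge> 1"
    and FV: "\<And>i. i \<in> {1..K} \<Longrightarrow> F i \<in> V"
    and empV: "\<And>i t. i \<in> {1..K} \<Longrightarrow> t \<ge> 1 \<Longrightarrow> emp_cdf X i t \<omega> \<in> V"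
    and "x > 0"
    and "x < N (\<lambda>y. pol_emp_cdf pol X U T \<omega> y - pol_mix_cdf K F pol X U T \<omega> y)"
  shows "\<exists>i\<in>{1..K}. \<exists>t\<in>{1..T}.
           real T * x / (real K * real t) \<le> N (\<lambda>y. emp_cdf X i t \<omega> y - F i y)"
proof -
  let ?\<tau> = "\<lambda>i. pol_count pol X U i T \<omega>"
  let ?D = "\<lambda>i y. emp_cdf X i (?\<tau> i) \<omega> y - F i y"
  have "emp_cdf X i (?\<tau> i) \<omega> \<in> V" if "i \<in> {1..K}" for i
  proof (cases "?\<tau> i = 0")
    case True
    then show ?thesis using fun_norm_on_zero_mem[OF norm] by (simp add: emp_cdf_0)
  next
    case False
    then show ?thesis using empV[OF that] by simp
  qed
  then have DV: "?D i \<in> V" if "i \<in> {1..K}" for i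
    using fun_norm_on_diff_mem[OF norm _ FV] that by blast
  have dev_gt: "x < N (\<lambda>y. \<Sum>i = 1..K. real (?\<tau> i) / real T * ?D i y)"
    using assms(7) by (simp add: pol_emp_cdf_minus_pol_mix_cdf[OF adm])
  obtain i where i: "i \<in> {1..K}"
    and big: "x / real K < real (?\<tau> i) / real T * N (?D i)"
    by (rule fun_norm_on_weighted_sum_gt[OF norm, of "{1..K}" ?D "\<lambda>i. real (?\<tau> i) / real T" x])
      (use DV dev_gt \<open>K \<ge> 1\<close> in auto)
  have "?\<tau> i \<noteq> 0"
  proof
    assume "?\<tau> i = 0"
    with big have "x / real K < 0" by simp
    with \<open>x > 0\<close> show False by (simp add: divide_less_0_iff)
  qed
  moreover have "?\<tau> i \<le> T" by (rule pol_count_le)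
  moreover from calculation have "real T * x / (real K * real (?\<tau> i)) \<le> N (?D i)"
    using big \<open>K \<ge> 1\<close> by (simp add: field_simps)
  ultimately show ?thesis using i by fastforce
qed

lemma exp_neg_scaled_threshold_le:
  fixes a x :: real and t T K :: nat
  assumes "a \<ge> 0" "1 \<le> t" "t \<le> T"
  shows "exp (- a * real t * (real T * x / (real K * real t))\<^sup>2)
           \<le> exp (- a * (real T * x\<^sup>2) / (real K)\<^sup>2)"
proof -
  have "real T * x\<^sup>2 / (real K)\<^sup>2 = (real T * x / real K)\<^sup>2 / real T"
    using assms(2,3) by (simp add: power2_eq_square)
  also have "\<dots> \<le> (real T * x / real K)\<^sup>2 / real t"
    using assms(2,3) by (intro divide_left_mono) auto
  also have "\<dots> = real t * (real T * x / (real K * real t))\<^sup>2"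
    using assms(2) by (simp add: power2_eq_square)
  finally have "a * (real T * x\<^sup>2 / (real K)\<^sup>2)
      \<le> a * (real t * (real T * x / (real K * real t))\<^sup>2)"
    using assms(1) by (rule mult_left_mono)
  then show ?thesis by (simp add: mult.assoc)
qed

lemma measure_ge_scaled_threshold_le:
  fixes g :: "'a \<Rightarrow> real" and a x :: real and t T K :: nat
  assumes tail: "\<And>c. c > 0 \<Longrightarrow> measure M {\<omega> \<in> space M. g \<omega> \<ge> c} \<le> 2 * exp (- a * real t * c\<^sup>2)"
    and "a \<ge> 0" "x > 0" "K \<ge> 1" "1 \<le> t" "t \<le> T"
  shows "measure M {\<omega> \<in> space M. real T * x / (real K * real t) \<le> g \<omega>}
           \<le> 2 * exp (- a * (real T * x\<^sup>2) / (real K)\<^sup>2)"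
proof -
  have "real T * x / (real K * real t) > 0" using assms(3-6) by simp
  then have "measure M {\<omega> \<in> space M. real T * x / (real K * real t) \<le> g \<omega>}
      \<le> 2 * exp (- a * real t * (real T * x / (real K * real t))\<^sup>2)"
    by (rule tail)
  also have "\<dots> \<le> 2 * exp (- a * (real T * x\<^sup>2) / (real K)\<^sup>2)"
    using exp_neg_scaled_threshold_le[OF assms(2,5,6)] by simp
  finally show ?thesis .
qed

lemma (in prob_space) prob_le_card_mult_of_cover:
  assumes "finite I" "A \<subseteq> (\<Union>p\<in>I. E p)"
    and "\<And>p. p \<in> I \<Longrightarrow> E p \<in> events" "\<And>p. p \<in> I \<Longrightarrow> prob (E p) \<le> b"
  shows "prob A \<le> real (card I) * b"
proof -
  have "prob A \<le> prob (\<Union>p\<in>I. E p)"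
    using assms by (intro finite_measure_mono) auto
  also have "\<dots> \<le> (\<Sum>p\<in>I. prob (E p))"
    using assms by (intro finite_measure_subadditive_finite) auto
  also have "\<dots> \<le> real (card I) * b"
    using assms(4) by (rule sum_bounded_above)
  finally show ?thesis .
qed

theorem lemma18:
  fixes M :: "'a measure" and K :: nat and X :: "nat \<Rightarrow> nat \<Rightarrow> 'a \<Rightarrow> real"
    and F :: "nat \<Rightarrow> real \<Rightarrow> real" and Mu :: "'u measure" and U :: "'a \<Rightarrow> 'u"
    and V :: "(real \<Rightarrow> real) set" and N :: "(real \<Rightarrow> real) \<Rightarrow> real" and a :: real
    and pol :: "nat \<Rightarrow> 'u \<Rightarrow> (nat \<Rightarrow> nat) \<Rightarrow> (nat \<Rightarrow> real) \<Rightarrow> nat"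
    and T :: nat and x :: real
  assumes P: "prob_space M"
    and K: "K \<ge> 1"
    and Xmeas: "\<And>i s. i \<in> {1..K} \<Longrightarrow> s \<ge> 1 \<Longrightarrow> X i s \<in> borel_measurable M"
    and Xdist: "\<And>i s y. i \<in> {1..K} \<Longrightarrow> s \<ge> 1 \<Longrightarrow> F i y = measure M {\<omega> \<in> space M. X i s \<omega> \<le> y}"
    and Xindep: "prob_space.indep_vars M (\<lambda>_. borel) (\<lambda>(i, s). X i s) ({1..K} \<times> {1..})"
    and Umeas: "U \<in> measurable M Mu"
    and Uindep: "prob_space.indep_set M (sets (vimage_algebra (space M) U Mu))
                   (sets (vimage_algebra (space M)
                      (\<lambda>\<omega>. restrict (\<lambda>(i, s). X i s \<omega>) ({1..K} \<times> {1..}))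
                      (PiM ({1..K} \<times> {1..}) (\<lambda>_. borel))))"
    and norm: "fun_norm_on V N"
    and FV: "\<And>i. i \<in> {1..K} \<Longrightarrow> F i \<in> V"
    and empV: "\<And>i t \<omega>. i \<in> {1..K} \<Longrightarrow> t \<ge> 1 \<Longrightarrow> \<omega> \<in> space M \<Longrightarrow> emp_cdf X i t \<omega> \<in> V"
    and devmeas: "\<And>i t. i \<in> {1..K} \<Longrightarrow> t \<ge> 1 \<Longrightarrow>
                    (\<lambda>\<omega>. N (\<lambda>y. emp_cdf X i t \<omega> y - F i y)) \<in> borel_measurable M"
    and a: "a > 0"
    and conc: "\<And>i x t. i \<in> {1..K} \<Longrightarrow> x > 0 \<Longrightarrow> t \<ge> 1 \<Longrightarrow>
                 measure M {\<omega> \<in> space M. N (\<lambda>y. emp_cdf X i t \<omega> y - F i y) \<ge> x}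
                   \<le> 2 * exp (- a * real t * x\<^sup>2)"
    and adm: "admissible_policy K Mu pol"
    and T: "T \<ge> 1"
    and x: "x \<ge> 0"
  shows "measure M {\<omega> \<in> space M.
            N (\<lambda>y. pol_emp_cdf pol X U T \<omega> y - pol_mix_cdf K F pol X U T \<omega> y) > x}
         \<le> 2 * real K * real T * exp (- a * (real T * x\<^sup>2) / (real K)\<^sup>2)"
proof -
  interpret prob_space M by (rule P)
  let ?event = "{\<omega> \<in> space M.
    N (\<lambda>y. pol_emp_cdf pol X U T \<omega> y - pol_mix_cdf K F pol X U T \<omega> y) > x}"
  consider "x = 0" | "x > 0" using x by linarith
  then show ?thesis
  proof cases
    case 1
    have "1 \<le> real K * real T" using mult_mono[of 1 "real K" 1 "real T"] K T by simp
    then have "prob ?event \<le> 2 * real K * real T"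
      using prob_le_1[of ?event] by linarith
    then show ?thesis using 1 by simp
  next
    case 2
    define E where "E p = {\<omega> \<in> space M. real T * x / (real K * real (snd p))
        \<le> N (\<lambda>y. emp_cdf X (fst p) (snd p) \<omega> y - F (fst p) y)}" for p
    have cover: "?event \<subseteq> (\<Union>p\<in>{1..K} \<times> {1..T}. E p)"
      using pol_deviation_gt_imp_arm_deviation_ge[OF norm adm K FV empV 2]
      by (fastforce simp: E_def)
    have events: "E p \<in> events" if "p \<in> {1..K} \<times> {1..T}" for p
      using devmeas that unfolding E_def by (auto intro!: borel_measurable_le)
    have tail: "prob (E p) \<le> 2 * exp (- a * (real T * x\<^sup>2) / (real K)\<^sup>2)"
      if "p \<in> {1..K} \<times> {1..T}" for p
      unfolding E_def
      by (rule measure_ge_scaled_threshold_le[OF conc]) (use that a 2 K in auto)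
    show ?thesis
      using prob_le_card_mult_of_cover[OF _ cover events tail]
      by (simp add: card_cartesian_product)
  qed
qed

end
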